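(* Let $X,Y,P$ be Banach spaces, $F:X\times P\rightrightarrows Y$ and $G:X\rightrightarrows Y$ set-valued maps and $(\overline{x},\overline{p},\overline{y})\in X\times P\times Y$ with $\overline{y}\in F(\overline{x},\overline{p})$ and $-\overline{y}\in G(\overline{x})$. Let $S:P\rightrightarrows X$, $S(p)=\{x\in X: 0\in F(x,p)+G(x)\}$. Suppose: (i) $(F,G)$ is locally sum-stable around $(\overline{x},\overline{p},\overline{y},-\overline{y})$; (ii) $F(x,\cdot)$ is inner semicontinuous at $(\overline{p},\overline{y})$ for every $x$ in a neighborhood of $\overline{x}$; (iii) $F$ is Lipschitz-like with respect to $x$ uniformly in $p$ around $((\overline{x},\overline{p}),\overline{y})$; (iv) $F$ is metrically regular with respect to $p$ uniformly in $x$ around $((\overline{x},\overline{p}),\overline{y})$; (v) $G$ is Lipschitz-like around $(\overline{x},-\overline{y})$. Then $S$ is metrically regular around $(\overline{p},\overline{x})$ and \[ \operatorname{reg}S(\overline{p},\overline{x})\le\widehat{\operatorname{reg}}_pF((\overline{x},\overline{p}),\overline{y})\cdot\big[\widehat{\operatorname{lip}}_xF((\overline{x},\overline{p}),\overline{y})+\operatorname{lip}G(\overline{x},-\overline{y})\big]. \]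
   Context: $B$ open balls, $\mathbb{D}_Y$ closed unit ball, $d(x,A)=\inf_{a\in A}\|x-a\|$, $d(x,\emptyset)=\infty$; products carry the sum norm. Write $F_p=F(\cdot,p)$, $F_x=F(x,\cdot)$. $(F,G)$ is locally sum-stable around $(\overline{x},\overline{p},\overline{y},\overline{z})$ (where $\overline{y}\in F(\overline{x},\overline{p})$, $\overline{z}\in G(\overline{x})$) if for every $\varepsilon>0$ there is $\delta>0$ such that for every $(x,p)\in B(\overline{x},\delta)\times B(\overline{p},\delta)$ and every $w\in(F_p+G)(x)\cap B(\overline{y}+\overline{z},\delta)$ there exist $y\in F_p(x)\cap B(\overline{y},\varepsilon)$ and $z\in G(x)\cap B(\overline{z},\varepsilon)$ with $w=y+z$. A multifunction $T$ is inner semicontinuous at $(a,b)\in\operatorname{Gr}T$ if for every open $D\ni b$ there is a neighborhood $U$ of $a$ with $T(a')\cap D\neq\emptyset$ for all $a'\in U$. $F$ is Lipschitz-like with respect to $x$ uniformly in $p$ around $((\overline{x},\overline{p}),\overline{y})$ with constant $L$ if there are neighborhoods $U$ of $\overline{x}$, $V$ of $\overline{p}$, $W$ of $\overline{y}$ such that $F_p(x)\cap W\subset F_p(u)+L\|x-u\|\mathbb{D}_Y$ for all $x,u\in U$, $p\in V$; $\widehat{\operatorname{lip}}_xF((\overline{x},\overline{p}),\overline{y})$ is the infimum of such $L$. $F$ is metrically regular with respect to $p$ uniformly in $x$ around $((\overline{x},\overline{p}),\overline{y})$ with constant $L$ if there are such neighborhoods with $d(p,F_x^{-1}(y))\le L\,d(y,F_x(p))$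 for all $(x,p,y)\in U\times V\times W$; $\widehat{\operatorname{reg}}_pF((\overline{x},\overline{p}),\overline{y})$ is the infimum of such $L$. $T:A\rightrightarrows B$ is Lipschitz-like around $(\overline{a},\overline{b})$ with constant $L$ if there are neighborhoods $U$ of $\overline{a}$, $V$ of $\overline{b}$ with $T(a)\cap V\subset T(u)+L\|a-u\|\mathbb{D}_B$ for all $a,u\in U$ ($\operatorname{lip}T(\overline{a},\overline{b})$ the infimum of such $L$); $T$ is metrically regular around $(\overline{a},\overline{b})$ with constant $L$ if there are neighborhoods $U,V$ with $d(a,T^{-1}(b))\le L\,d(b,T(a))$ for all $(a,b)\in U\times V$ ($\operatorname{reg}T(\overline{a},\overline{b})$ the infimum of such $L$). *)

theory Defs
  imports "HOL-Analysis.Analysis"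
begin

definition setdist_e :: "'a::metric_space \<Rightarrow> 'a set \<Rightarrow> ereal" where
  "setdist_e x A = (if A = {} then \<infinity> else ereal (infdist x A))"

definition locally_sum_stable ::
  "('x::real_normed_vector \<Rightarrow> 'p::real_normed_vector \<Rightarrow> 'y::real_normed_vector set)
   \<Rightarrow> ('x \<Rightarrow> 'y set) \<Rightarrow> 'x \<Rightarrow> 'p \<Rightarrow> 'y \<Rightarrow> 'y \<Rightarrow> bool" where
  "locally_sum_stable F G xb pb yb zb \<longleftrightarrow>
     (\<forall>\<epsilon>>0. \<exists>\<delta>>0. \<forall>x\<in>ball xb \<delta>. \<forall>p\<in>ball pb \<delta>.
        \<forall>w \<in> {y + z | y z. y \<in> F x p \<and> z \<in> G x} \<inter> ball (yb + zb) \<delta>.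
          \<exists>y\<in>F x p \<inter> ball yb \<epsilon>. \<exists>z\<in>G x \<inter> ball zb \<epsilon>. w = y + z)"

definition inner_semicontinuous :: "('a::topological_space \<Rightarrow> 'b::topological_space set) \<Rightarrow> 'a \<Rightarrow> 'b \<Rightarrow> bool" where
  "inner_semicontinuous T a b \<longleftrightarrow>
     (\<forall>D. open D \<and> b \<in> D \<longrightarrow> (\<exists>U. open U \<and> a \<in> U \<and> (\<forall>a'\<in>U. T a' \<inter> D \<noteq> {})))"

definition lipschitz_like_x ::
  "('x::real_normed_vector \<Rightarrow> 'p::real_normed_vector \<Rightarrow> 'y::real_normed_vector set)
   \<Rightarrow> 'x \<Rightarrow> 'p \<Rightarrow> 'y \<Rightarrow> real \<Rightarrow> bool" where
  "lipschitz_like_x F xb pb yb L \<longleftrightarrow> 0 \<le> L \<and>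
     (\<exists>U V W. open U \<and> xb \<in> U \<and> open V \<and> pb \<in> V \<and> open W \<and> yb \<in> W \<and>
        (\<forall>x\<in>U. \<forall>u\<in>U. \<forall>p\<in>V. \<forall>y \<in> F x p \<inter> W. \<exists>v \<in> F u p. norm (y - v) \<le> L * norm (x - u)))"

definition lip_hat_x ::
  "('x::real_normed_vector \<Rightarrow> 'p::real_normed_vector \<Rightarrow> 'y::real_normed_vector set)
   \<Rightarrow> 'x \<Rightarrow> 'p \<Rightarrow> 'y \<Rightarrow> real" where
  "lip_hat_x F xb pb yb = Inf {L. lipschitz_like_x F xb pb yb L}"

definition metric_regular_p ::
  "('x::real_normed_vector \<Rightarrow> 'p::real_normed_vector \<Rightarrow> 'y::real_normed_vector set)
   \<Rightarrow> 'x \<Rightarrow> 'p \<Rightarrow> 'y \<Rightarrow> real \<Rightarrow> bool" where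
  "metric_regular_p F xb pb yb L \<longleftrightarrow> 0 < L \<and>
     (\<exists>U V W. open U \<and> xb \<in> U \<and> open V \<and> pb \<in> V \<and> open W \<and> yb \<in> W \<and>
        (\<forall>x\<in>U. \<forall>p\<in>V. \<forall>y\<in>W.
           setdist_e p {q. y \<in> F x q} \<le> ereal L * setdist_e y (F x p)))"

definition reg_hat_p ::
  "('x::real_normed_vector \<Rightarrow> 'p::real_normed_vector \<Rightarrow> 'y::real_normed_vector set)
   \<Rightarrow> 'x \<Rightarrow> 'p \<Rightarrow> 'y \<Rightarrow> real" where
  "reg_hat_p F xb pb yb = Inf {L. metric_regular_p F xb pb yb L}"

definition lipschitz_like ::
  "('a::real_normed_vector \<Rightarrow> 'b::real_normed_vector set) \<Rightarrow> 'a \<Rightarrow> 'b \<Rightarrow> real \<Rightarrow> bool" where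
  "lipschitz_like T ab bb L \<longleftrightarrow> 0 \<le> L \<and>
     (\<exists>U V. open U \<and> ab \<in> U \<and> open V \<and> bb \<in> V \<and>
        (\<forall>a\<in>U. \<forall>u\<in>U. \<forall>b \<in> T a \<inter> V. \<exists>v \<in> T u. norm (b - v) \<le> L * norm (a - u)))"

definition lip :: "('a::real_normed_vector \<Rightarrow> 'b::real_normed_vector set) \<Rightarrow> 'a \<Rightarrow> 'b \<Rightarrow> real" where
  "lip T ab bb = Inf {L. lipschitz_like T ab bb L}"

definition metric_regular ::
  "('a::real_normed_vector \<Rightarrow> 'b::real_normed_vector set) \<Rightarrow> 'a \<Rightarrow> 'b \<Rightarrow> real \<Rightarrow> bool" where
  "metric_regular T ab bb L \<longleftrightarrow> 0 < L \<and>
     (\<exists>U V. open U \<and> ab \<in> U \<and> open V \<and> bb \<in> V \<and>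
        (\<forall>a\<in>U. \<forall>b\<in>V. setdist_e a {a'. b \<in> T a'} \<le> ereal L * setdist_e b (T a)))"

definition reg :: "('a::real_normed_vector \<Rightarrow> 'b::real_normed_vector set) \<Rightarrow> 'a \<Rightarrow> 'b \<Rightarrow> real" where
  "reg T ab bb = Inf {L. metric_regular T ab bb L}"

end

theory Submission
  imports Defs
begin

(*
  Let x' solve 0 \<in> F(x',p) + G(x') and let x be close to x'. Sum-stability splits the zero as
  y + (-y) with y \<in> F(x',p) near yb and -y \<in> G(x') near -yb. The Lipschitz-like properties
  move -y to some z \<in> G(x) and y to some v \<in> F(x,p), each by at most a Lipschitz constant
  times |x - x'|, so d(-z, F(x,p)) \<le> (l1 + l2)|x - x'|. Metric regularity of F in p turns this
  into d(p, F_x^-1(-z)) \<le> r (l1 + l2)|x - x'|, and F_x^-1(-z) \<subseteq> S^-1(x) because z \<in> G(x).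
  This Aubin property of S^-1 with constant r (l1 + l2) yields metric regularity of S with
  every larger constant, and letting r, l1, l2 decrease to the infimal moduli gives the bound.
*)

lemma infdist_lessE:
  assumes "infdist x A < e" and "A \<noteq> {}"
  obtains a where "a \<in> A" and "dist x a < e"
proof -
  have "bdd_below ((\<lambda>a. dist x a) ` A)"
    by (rule bdd_belowI[of _ 0]) auto
  with assms show ?thesis
    using that by (auto simp: infdist_notempty cINF_less_iff)
qed

lemma setdist_e_nonneg: "0 \<le> setdist_e x A"
  by (simp add: setdist_e_def infdist_nonneg)

lemma setdist_e_le_dist: "a \<in> A \<Longrightarrow> setdist_e x A \<le> ereal (dist x a)"
  by (auto simp: setdist_e_def infdist_le)

lemma setdist_e_antimono: "A \<subseteq> B \<Longrightarrow> setdist_e x B \<le> setdist_e x A"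
  by (auto simp: setdist_e_def infdist_mono)

lemma setdist_e_triangle: "setdist_e x A \<le> setdist_e y A + ereal (dist x y)"
  by (simp add: setdist_e_def infdist_triangle)

lemma setdist_e_le_scaled_infdist:
  assumes "A \<noteq> {}" and "infdist x A < \<sigma>" and "0 \<le> c"
    and near: "\<And>x'. x' \<in> A \<Longrightarrow> dist x x' < \<sigma> \<Longrightarrow> setdist_e p B \<le> ereal (c * dist x x')"
  shows "setdist_e p B \<le> ereal (c * infdist x A)"
proof (rule tendsto_lowerbound)
  show "((\<lambda>t. ereal (c * t)) \<longlongrightarrow> ereal (c * infdist x A)) (at_right (infdist x A))"
    by (intro tendsto_intros)
  show "\<forall>\<^sub>F t in at_right (infdist x A). setdist_e p B \<le> ereal (c * t)"
  proof (rule eventually_at_rightI)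
    fix t assume "t \<in> {infdist x A<..<\<sigma>}"
    then obtain x' where "x' \<in> A" and "dist x x' < t"
      using infdist_lessE[OF _ \<open>A \<noteq> {}\<close>] by auto
    moreover have "c * dist x x' \<le> c * t"
      using \<open>dist x x' < t\<close> \<open>0 \<le> c\<close> by (simp add: mult_left_mono)
    ultimately show "setdist_e p B \<le> ereal (c * t)"
      using near \<open>t \<in> _\<close> by (meson greaterThanLessThan_iff ereal_less_eq(3) less_trans order_trans)
  qed fact
qed simp

lemma setdist_e_inverse_le_reference:
  fixes T :: "'a::real_normed_vector \<Rightarrow> 'b::real_normed_vector set"
  assumes "bb \<in> T ab" and "0 < \<rho>" and "b \<in> ball bb \<rho>"
    and est: "\<And>a b b'. a \<in> ball ab \<rho> \<Longrightarrow> b \<in> ball bb \<rho> \<Longrightarrow> b' \<in> ball bb \<rho> \<Longrightarrow> b' \<in> T a \<Longrightarrow>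
                setdist_e a {a'. b \<in> T a'} \<le> ereal (c * dist b b')"
  shows "setdist_e a {a'. b \<in> T a'} \<le> ereal (c * dist b bb + dist a ab)"
proof -
  have "setdist_e a {a'. b \<in> T a'} \<le> setdist_e ab {a'. b \<in> T a'} + ereal (dist a ab)"
    by (rule setdist_e_triangle)
  also have "\<dots> \<le> ereal (c * dist b bb) + ereal (dist a ab)"
    using assms by (intro add_right_mono est) auto
  finally show ?thesis by simp
qed

lemma metric_regular_if_inverse_estimate:
  fixes T :: "'a::real_normed_vector \<Rightarrow> 'b::real_normed_vector set"
  assumes "bb \<in> T ab" and "0 \<le> c" and "c < L" and "0 < \<rho>"
    and est: "\<And>a b b'. a \<in> ball ab \<rho> \<Longrightarrow> b \<in> ball bb \<rho> \<Longrightarrow> b' \<in> ball bb \<rho> \<Longrightarrow> b' \<in> T a \<Longrightarrow>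
                setdist_e a {a'. b \<in> T a'} \<le> ereal (c * dist b b')"
  shows "metric_regular T ab bb L"
proof -
  define \<sigma> where "\<sigma> = \<rho> / 2"
  define \<alpha> where "\<alpha> = min \<sigma> (L * \<sigma> / (2 * (c + 1)))"
  define \<beta> where "\<beta> = min \<rho> (L * \<sigma> / 2)"
  have "0 < L" "0 < \<sigma>" using assms by (auto simp: \<sigma>_def)
  then have "0 < \<alpha>" "0 < \<beta>" using assms by (auto simp: \<alpha>_def \<beta>_def)
  have small_balls: "ball ab \<beta> \<subseteq> ball ab \<rho>" "ball bb \<alpha> \<subseteq> ball bb \<rho>"
    using \<open>0 < \<rho>\<close> by (auto intro!: subset_ball simp: \<alpha>_def \<beta>_def \<sigma>_def)
  have "c * \<alpha> \<le> (c + 1) * (L * \<sigma> / (2 * (c + 1)))"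
    using \<open>0 \<le> c\<close> \<open>0 < \<alpha>\<close> by (intro mult_mono) (auto simp: \<alpha>_def)
  also have "\<dots> = L * \<sigma> / 2" using \<open>0 \<le> c\<close> by (simp add: field_simps)
  finally have "c * \<alpha> \<le> L * \<sigma> / 2" .
  have "setdist_e a {a'. b \<in> T a'} \<le> ereal L * setdist_e b (T a)"
    if "a \<in> ball ab \<beta>" "b \<in> ball bb \<alpha>" for a b
  proof (cases "T a = {}")
    case True
    then show ?thesis using \<open>0 < L\<close> by (simp add: setdist_e_def)
  next
    case False
    have "setdist_e a {a'. b \<in> T a'} \<le> ereal (L * infdist b (T a))"
    proof (cases "\<sigma> \<le> infdist b (T a)")
      case True
      \<comment> \<open>far from \<open>T a\<close>: compare with the reference solution \<open>bb \<in> T ab\<close>\<close>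
      have "c * dist b bb + dist a ab \<le> L * \<sigma>"
        using that \<open>0 \<le> c\<close> \<open>c * \<alpha> \<le> L * \<sigma> / 2\<close> mult_left_mono[of "dist b bb" \<alpha> c]
        by (simp add: \<beta>_def dist_commute)
      also have "\<dots> \<le> L * infdist b (T a)" using True \<open>0 < L\<close> by simp
      finally have "c * dist b bb + dist a ab \<le> L * infdist b (T a)" .
      moreover have "b \<in> ball bb \<rho>" using that small_balls by blast
      then have "setdist_e a {a'. b \<in> T a'} \<le> ereal (c * dist b bb + dist a ab)"
        using \<open>bb \<in> T ab\<close> \<open>0 < \<rho>\<close> est by (intro setdist_e_inverse_le_reference)
      ultimately show ?thesis by (meson ereal_less_eq(3) order_trans)
    next
      case False
      have "setdist_e a {a'. b \<in> T a'} \<le> ereal (c * infdist b (T a))"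
      proof (rule setdist_e_le_scaled_infdist[OF \<open>T a \<noteq> {}\<close> _ \<open>0 \<le> c\<close>])
        show "infdist b (T a) < \<sigma>" using False by simp
        fix b' assume "b' \<in> T a" "dist b b' < \<sigma>"
        moreover have "dist bb b' < \<rho>"
          using dist_triangle[of bb b' b] \<open>dist b b' < \<sigma>\<close> that
          by (auto simp: \<alpha>_def \<sigma>_def dist_commute)
        ultimately show "setdist_e a {a'. b \<in> T a'} \<le> ereal (c * dist b b')"
          using that small_balls by (intro est) auto
      qed
      also have "\<dots> \<le> ereal (L * infdist b (T a))"
        using \<open>c < L\<close> by (simp add: mult_right_mono infdist_nonneg)
      finally show ?thesis .
    qed
    then show ?thesis using False by (simp add: setdist_e_def)
  qed
  then show ?thesis
    unfolding metric_regular_def using \<open>0 < L\<close> \<open>0 < \<alpha>\<close> \<open>0 < \<beta>\<close>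
    by (intro conjI exI[of _ "ball ab \<beta>"] exI[of _ "ball bb \<alpha>"]) auto
qed

lemma open_balls_common_radius:
  assumes "open U" "a \<in> U" "open V" "b \<in> V" "open W" "c \<in> W"
  obtains \<epsilon> where "0 < \<epsilon>" "ball a \<epsilon> \<subseteq> U" "ball b \<epsilon> \<subseteq> V" "ball c \<epsilon> \<subseteq> W"
proof -
  obtain \<epsilon>1 \<epsilon>2 \<epsilon>3 where "0 < \<epsilon>1" "ball a \<epsilon>1 \<subseteq> U" "0 < \<epsilon>2" "ball b \<epsilon>2 \<subseteq> V"
    "0 < \<epsilon>3" "ball c \<epsilon>3 \<subseteq> W"
    using assms open_contains_ball by metis
  then show ?thesis
    by (intro that[of "min \<epsilon>1 (min \<epsilon>2 \<epsilon>3)"]) (auto simp: ball_min_Int)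
qed

lemma metric_regular_pE:
  assumes "metric_regular_p F xb pb yb r"
  obtains \<epsilon> where "0 < \<epsilon>" and "0 < r"
    and "\<And>x p y. x \<in> ball xb \<epsilon> \<Longrightarrow> p \<in> ball pb \<epsilon> \<Longrightarrow> y \<in> ball yb \<epsilon> \<Longrightarrow>
           setdist_e p {q. y \<in> F x q} \<le> ereal r * setdist_e y (F x p)"
proof -
  obtain U V W where "0 < r" "open U" "xb \<in> U" "open V" "pb \<in> V" "open W" "yb \<in> W"
    and reg: "\<forall>x\<in>U. \<forall>p\<in>V. \<forall>y\<in>W. setdist_e p {q. y \<in> F x q} \<le> ereal r * setdist_e y (F x p)"
    using assms unfolding metric_regular_p_def by blast
  moreover obtain \<epsilon> where "0 < \<epsilon>" "ball xb \<epsilon> \<subseteq> U" "ball pb \<epsilon> \<subseteq> V" "ball yb \<epsilon> \<subseteq> W"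
    using open_balls_common_radius calculation by metis
  ultimately show ?thesis
    by (intro that[of \<epsilon>]) blast+
qed

lemma lipschitz_like_xE:
  assumes "lipschitz_like_x F xb pb yb l"
  obtains \<epsilon> where "0 < \<epsilon>" and "0 \<le> l"
    and "\<And>x u p y. x \<in> ball xb \<epsilon> \<Longrightarrow> u \<in> ball xb \<epsilon> \<Longrightarrow> p \<in> ball pb \<epsilon> \<Longrightarrow> y \<in> F x p \<Longrightarrow>
           y \<in> ball yb \<epsilon> \<Longrightarrow> \<exists>v \<in> F u p. norm (y - v) \<le> l * norm (x - u)"
proof -
  obtain U V W where "0 \<le> l" "open U" "xb \<in> U" "open V" "pb \<in> V" "open W" "yb \<in> W"
    and lip: "\<forall>x\<in>U. \<forall>u\<in>U. \<forall>p\<in>V. \<forall>y \<in> F x p \<inter> W. \<exists>v \<in> F u p. norm (y - v) \<le> l * norm (x - u)"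
    using assms unfolding lipschitz_like_x_def by blast
  moreover obtain \<epsilon> where "0 < \<epsilon>" "ball xb \<epsilon> \<subseteq> U" "ball pb \<epsilon> \<subseteq> V" "ball yb \<epsilon> \<subseteq> W"
    using open_balls_common_radius calculation by metis
  ultimately show ?thesis
    by (intro that[of \<epsilon>]) blast+
qed

lemma lipschitz_likeE:
  assumes "lipschitz_like T ab bb l"
  obtains \<epsilon> where "0 < \<epsilon>" and "0 \<le> l"
    and "\<And>a u b. a \<in> ball ab \<epsilon> \<Longrightarrow> u \<in> ball ab \<epsilon> \<Longrightarrow> b \<in> T a \<Longrightarrow> b \<in> ball bb \<epsilon> \<Longrightarrow>
           \<exists>v \<in> T u. norm (b - v) \<le> l * norm (a - u)"
proof -
  obtain U V where "0 \<le> l" "open U" "ab \<in> U" "open V" "bb \<in> V"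
    and lip: "\<forall>a\<in>U. \<forall>u\<in>U. \<forall>b \<in> T a \<inter> V. \<exists>v \<in> T u. norm (b - v) \<le> l * norm (a - u)"
    using assms unfolding lipschitz_like_def by blast
  moreover obtain \<epsilon> where "0 < \<epsilon>" "ball ab \<epsilon> \<subseteq> U" "ball bb \<epsilon> \<subseteq> V"
    using open_balls_common_radius[OF _ _ _ _ open_UNIV UNIV_I] calculation by metis
  ultimately show ?thesis
    by (intro that[of \<epsilon>]) blast+
qed

lemma metric_regular_p_mono:
  "metric_regular_p F xb pb yb r \<Longrightarrow> r \<le> r' \<Longrightarrow> metric_regular_p F xb pb yb r'"
  unfolding metric_regular_p_def
  by (smt (verit) ereal_less_eq(3) ereal_mult_right_mono order_trans setdist_e_nonneg)

lemma lipschitz_like_x_mono: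
  "lipschitz_like_x F xb pb yb l \<Longrightarrow> l \<le> l' \<Longrightarrow> lipschitz_like_x F xb pb yb l'"
  unfolding lipschitz_like_x_def
  by (smt (verit, best) mult_right_mono norm_ge_zero)

lemma lipschitz_like_mono:
  "lipschitz_like T ab bb l \<Longrightarrow> l \<le> l' \<Longrightarrow> lipschitz_like T ab bb l'"
  unfolding lipschitz_like_def
  by (smt (verit, best) mult_right_mono norm_ge_zero)

lemma mem_upward_closed_if_Inf_less:
  fixes P :: "real \<Rightarrow> bool"
  assumes "\<exists>a. P a" and up: "\<And>a b. P a \<Longrightarrow> a \<le> b \<Longrightarrow> P b" and "Inf (Collect P) < t"
  shows "P t"
proof -
  obtain a where "P a" and "a < t"
    using cInf_lessD[of "Collect P" t] assms(1,3) by auto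
  then show ?thesis using up[of a t] by simp
qed

lemma Inf_le_if_all_greater:
  fixes P :: "real \<Rightarrow> bool"
  assumes greater: "\<And>L. K < L \<Longrightarrow> P L" and nonneg: "\<And>L. P L \<Longrightarrow> 0 \<le> L"
  shows "Inf (Collect P) \<le> K"
proof (rule field_le_epsilon)
  fix e :: real assume "0 < e"
  have "bdd_below (Collect P)" using nonneg by (intro bdd_belowI[of _ 0]) auto
  then show "Inf (Collect P) \<le> K + e"
    using greater \<open>0 < e\<close> by (intro cInf_lower) auto
qed

lemma perturbed_product_less:
  fixes r a b L :: real
  assumes "r * (a + b) < L"
  obtains \<eta> where "0 < \<eta>" and "(r + \<eta>) * ((a + \<eta>) + (b + \<eta>)) < L"
proof -
  have "((\<lambda>\<eta>. (r + \<eta>) * ((a + \<eta>) + (b + \<eta>))) \<longlongrightarrow> r * (a + b)) (at_right 0)"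
    by (auto intro!: tendsto_eq_intros)
  then have "\<forall>\<^sub>F \<eta> in at_right 0. (r + \<eta>) * ((a + \<eta>) + (b + \<eta>)) < L"
    using assms by (rule order_tendstoD(2))
  with eventually_at_right_less
  have "\<forall>\<^sub>F \<eta> in at_right 0. 0 < \<eta> \<and> (r + \<eta>) * ((a + \<eta>) + (b + \<eta>)) < L"
    by (rule eventually_conj)
  then have "\<exists>\<eta>. 0 < \<eta> \<and> (r + \<eta>) * ((a + \<eta>) + (b + \<eta>)) < L"
    by (rule eventually_happens'[rotated]) simp
  with that show ?thesis by blast
qed

definition solution_map :: "('x \<Rightarrow> 'p \<Rightarrow> 'y::ab_group_add set) \<Rightarrow> ('x \<Rightarrow> 'y set) \<Rightarrow> 'p \<Rightarrow> 'x set" where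
  "solution_map F G p = {x. 0 \<in> {y + z | y z. y \<in> F x p \<and> z \<in> G x}}"

lemma mem_solution_map_iff: "x \<in> solution_map F G p \<longleftrightarrow> (\<exists>y \<in> F x p. - y \<in> G x)"
  by (auto simp: solution_map_def add_eq_0_iff)

lemma solution_map_near_summand:
  assumes "locally_sum_stable F G xb pb yb (- yb)" and "0 < \<epsilon>"
  obtains \<delta> where "0 < \<delta>"
    and "\<And>x p. x \<in> ball xb \<delta> \<Longrightarrow> p \<in> ball pb \<delta> \<Longrightarrow> x \<in> solution_map F G p \<Longrightarrow>
           \<exists>y \<in> F x p \<inter> ball yb \<epsilon>. - y \<in> G x"
proof -
  obtain \<delta> where "0 < \<delta>" and split:
    "\<forall>x\<in>ball xb \<delta>. \<forall>p\<in>ball pb \<delta>. \<forall>w \<in> {y + z | y z. y \<in> F x p \<and> z \<in> G x} \<inter> ball (yb + - yb) \<delta>.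
       \<exists>y\<in>F x p \<inter> ball yb \<epsilon>. \<exists>z\<in>G x \<inter> ball (- yb) \<epsilon>. w = y + z"
    using assms(1)[unfolded locally_sum_stable_def, rule_format, OF \<open>0 < \<epsilon>\<close>] by auto
  show ?thesis
  proof (rule that[OF \<open>0 < \<delta>\<close>])
    fix x p assume x: "x \<in> ball xb \<delta>" and p: "p \<in> ball pb \<delta>" and "x \<in> solution_map F G p"
    then obtain y0 where "y0 \<in> F x p" "- y0 \<in> G x" by (auto simp: mem_solution_map_iff)
    then have "0 \<in> {y + z | y z. y \<in> F x p \<and> z \<in> G x} \<inter> ball (yb + - yb) \<delta>"
      using \<open>0 < \<delta>\<close> by force
    then obtain y z where "y \<in> F x p \<inter> ball yb \<epsilon>" "z \<in> G x" "0 = y + z"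
      using split x p by (fastforce dest!: bspec)
    then show "\<exists>y \<in> F x p \<inter> ball yb \<epsilon>. - y \<in> G x"
      by (metis neg_eq_iff_add_eq_0)
  qed
qed

lemma setdist_e_solution_map_inverse_le:
  fixes F :: "'x \<Rightarrow> 'p::real_normed_vector \<Rightarrow> 'y::real_normed_vector set"
  assumes "0 \<le> r" and "z \<in> G x" and "v \<in> F x p"
    and "norm (- y - z) \<le> l2 * d" and "norm (y - v) \<le> l1 * d"
    and reg: "setdist_e p {q. - z \<in> F x q} \<le> ereal r * setdist_e (- z) (F x p)"
  shows "setdist_e p {q. x \<in> solution_map F G q} \<le> ereal (r * (l1 + l2) * d)"
proof -
  have "(- y - z) + (y - v) = - z - v" by simp
  then have "dist (- z) v = norm ((- y - z) + (y - v))" by (simp add: dist_norm)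
  also have "\<dots> \<le> (l1 + l2) * d"
    using norm_triangle_ineq[of "- y - z" "y - v"] assms(4,5) by (simp add: algebra_simps)
  finally have "setdist_e (- z) (F x p) \<le> ereal ((l1 + l2) * d)"
    using setdist_e_le_dist[OF \<open>v \<in> F x p\<close>, of "- z"] by (simp add: order_trans)
  have "setdist_e p {q. x \<in> solution_map F G q} \<le> setdist_e p {q. - z \<in> F x q}"
    using \<open>z \<in> G x\<close> by (intro setdist_e_antimono) (force simp: mem_solution_map_iff)
  also have "\<dots> \<le> ereal r * setdist_e (- z) (F x p)" by (fact reg)
  also have "\<dots> \<le> ereal r * ereal ((l1 + l2) * d)"
    using \<open>setdist_e (- z) (F x p) \<le> _\<close> by (rule ereal_mult_left_mono) (simp add: \<open>0 \<le> r\<close>)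
  finally show ?thesis by (simp add: mult.assoc)
qed

lemma solution_map_inverse_step:
  fixes F :: "'x::real_normed_vector \<Rightarrow> 'p::real_normed_vector \<Rightarrow> 'y::real_normed_vector set"
  assumes "0 < r" and "0 \<le> l2"
    and reg_ball: "\<And>x p y. x \<in> ball xb \<epsilon> \<Longrightarrow> p \<in> ball pb \<epsilon> \<Longrightarrow> y \<in> ball yb \<epsilon> \<Longrightarrow>
           setdist_e p {q. y \<in> F x q} \<le> ereal r * setdist_e y (F x p)"
    and lipF_ball: "\<And>x u p y. x \<in> ball xb \<epsilon> \<Longrightarrow> u \<in> ball xb \<epsilon> \<Longrightarrow> p \<in> ball pb \<epsilon> \<Longrightarrow> y \<in> F x p \<Longrightarrow>
           y \<in> ball yb \<epsilon> \<Longrightarrow> \<exists>v \<in> F u p. norm (y - v) \<le> l1 * norm (x - u)"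
    and lipG_ball: "\<And>a u b. a \<in> ball xb \<epsilon> \<Longrightarrow> u \<in> ball xb \<epsilon> \<Longrightarrow> b \<in> G a \<Longrightarrow> b \<in> ball (- yb) \<epsilon> \<Longrightarrow>
           \<exists>v \<in> G u. norm (b - v) \<le> l2 * norm (a - u)"
    and x: "x \<in> ball xb \<epsilon>" and x': "x' \<in> ball xb \<epsilon>" and p: "p \<in> ball pb \<epsilon>"
    and y: "y \<in> F x' p" "dist yb y < \<epsilon> / 2" "- y \<in> G x'"
    and "l2 * dist x x' \<le> \<epsilon> / 2"
  shows "setdist_e p {q. x \<in> solution_map F G q} \<le> ereal (r * (l1 + l2) * dist x x')"
proof -
  have "dist yb y < \<epsilon>" using y zero_le_dist[of yb y] by linarith
  then have "y \<in> ball yb \<epsilon>" "- y \<in> ball (- yb) \<epsilon>" by (simp_all add: dist_minus)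
  have "norm (x' - x) = dist x x'" by (simp add: dist_norm norm_minus_commute)
  obtain z where "z \<in> G x" and z: "norm (- y - z) \<le> l2 * dist x x'"
    using lipG_ball[OF x' x \<open>- y \<in> G x'\<close> \<open>- y \<in> ball (- yb) \<epsilon>\<close>] \<open>norm (x' - x) = _\<close> by auto
  obtain v where "v \<in> F x p" and v: "norm (y - v) \<le> l1 * dist x x'"
    using lipF_ball[OF x' x p \<open>y \<in> F x' p\<close> \<open>y \<in> ball yb \<epsilon>\<close>] \<open>norm (x' - x) = _\<close> by auto
  have "(- y - z) + (y - yb) = - z - yb" by simp
  then have "dist yb (- z) = norm ((- y - z) + (y - yb))"
    by (metis dist_commute dist_norm)
  also have "\<dots> \<le> norm (- y - z) + dist yb y"
    by (metis dist_norm norm_minus_commute norm_triangle_ineq)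
  also have "\<dots> < \<epsilon>"
    using z y \<open>l2 * dist x x' \<le> \<epsilon> / 2\<close> by linarith
  finally have "setdist_e p {q. - z \<in> F x q} \<le> ereal r * setdist_e (- z) (F x p)"
    using reg_ball x p by simp
  then show ?thesis
    using \<open>0 < r\<close> \<open>z \<in> G x\<close> \<open>v \<in> F x p\<close> z v by (intro setdist_e_solution_map_inverse_le) auto
qed

lemma solution_map_inverse_estimate:
  fixes F :: "'x::real_normed_vector \<Rightarrow> 'p::real_normed_vector \<Rightarrow> 'y::real_normed_vector set"
  assumes reg: "metric_regular_p F xb pb yb r" and lipF: "lipschitz_like_x F xb pb yb l1"
    and lipG: "lipschitz_like G xb (- yb) l2" and stable: "locally_sum_stable F G xb pb yb (- yb)"
  obtains \<rho> where "0 < \<rho>"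
    and "\<And>x p x'. x \<in> ball xb \<rho> \<Longrightarrow> p \<in> ball pb \<rho> \<Longrightarrow> x' \<in> ball xb \<rho> \<Longrightarrow> x' \<in> solution_map F G p \<Longrightarrow>
           setdist_e p {q. x \<in> solution_map F G q} \<le> ereal (r * (l1 + l2) * dist x x')"
proof -
  obtain \<epsilon>1 where "0 < \<epsilon>1" "0 < r" and reg_ball:
    "\<And>x p y. x \<in> ball xb \<epsilon>1 \<Longrightarrow> p \<in> ball pb \<epsilon>1 \<Longrightarrow> y \<in> ball yb \<epsilon>1 \<Longrightarrow>
       setdist_e p {q. y \<in> F x q} \<le> ereal r * setdist_e y (F x p)"
    using metric_regular_pE[OF reg] by metis
  obtain \<epsilon>2 where "0 < \<epsilon>2" and lipF_ball:
    "\<And>x u p y. x \<in> ball xb \<epsilon>2 \<Longrightarrow> u \<in> ball xb \<epsilon>2 \<Longrightarrow> p \<in> ball pb \<epsilon>2 \<Longrightarrow> y \<in> F x p \<Longrightarrow>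
       y \<in> ball yb \<epsilon>2 \<Longrightarrow> \<exists>v \<in> F u p. norm (y - v) \<le> l1 * norm (x - u)"
    using lipschitz_like_xE[OF lipF] by metis
  obtain \<epsilon>3 where "0 < \<epsilon>3" "0 \<le> l2" and lipG_ball:
    "\<And>a u b. a \<in> ball xb \<epsilon>3 \<Longrightarrow> u \<in> ball xb \<epsilon>3 \<Longrightarrow> b \<in> G a \<Longrightarrow> b \<in> ball (- yb) \<epsilon>3 \<Longrightarrow>
       \<exists>v \<in> G u. norm (b - v) \<le> l2 * norm (a - u)"
    using lipschitz_likeE[OF lipG] by metis
  define \<epsilon> where "\<epsilon> = min \<epsilon>1 (min \<epsilon>2 \<epsilon>3)"
  have "0 < \<epsilon> / 2" using \<open>0 < \<epsilon>1\<close> \<open>0 < \<epsilon>2\<close> \<open>0 < \<epsilon>3\<close> by (simp add: \<epsilon>_def)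
  then obtain \<delta> where "0 < \<delta>" and near_summand:
    "\<And>x p. x \<in> ball xb \<delta> \<Longrightarrow> p \<in> ball pb \<delta> \<Longrightarrow> x \<in> solution_map F G p \<Longrightarrow>
       \<exists>y \<in> F x p \<inter> ball yb (\<epsilon> / 2). - y \<in> G x"
    using solution_map_near_summand[OF stable] by metis
  define \<rho> where "\<rho> = min (min \<epsilon> \<delta>) (\<epsilon> / (4 * (l2 + 1)))"
  have "0 < \<rho>" using \<open>0 < \<epsilon> / 2\<close> \<open>0 < \<delta>\<close> \<open>0 \<le> l2\<close> by (simp add: \<rho>_def)
  have "l2 * (2 * \<rho>) \<le> \<epsilon> / 2"
  proof -
    have "\<rho> \<le> \<epsilon> / (4 * (l2 + 1))" by (simp add: \<rho>_def)
    then have "\<rho> * (4 * (l2 + 1)) \<le> \<epsilon>"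
      using \<open>0 \<le> l2\<close> by (simp add: pos_le_divide_eq)
    then show ?thesis using \<open>0 < \<rho>\<close> by (simp add: algebra_simps)
  qed
  show ?thesis
  proof (rule that[OF \<open>0 < \<rho>\<close>])
    fix x p x'
    assume x: "x \<in> ball xb \<rho>" and p: "p \<in> ball pb \<rho>" and x': "x' \<in> ball xb \<rho>"
      and "x' \<in> solution_map F G p"
    then obtain y where "y \<in> F x' p" "dist yb y < \<epsilon> / 2" "- y \<in> G x'"
      using near_summand[of x' p] by (auto simp: \<rho>_def)
    moreover have "l2 * dist x x' \<le> \<epsilon> / 2"
    proof -
      have "dist x x' \<le> 2 * \<rho>"
        using x x' dist_triangle[of x x' xb] by (simp add: dist_commute)
      then show ?thesis
        using \<open>0 \<le> l2\<close> \<open>l2 * (2 * \<rho>) \<le> \<epsilon> / 2\<close> by (meson mult_left_mono order_trans)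
    qed
    ultimately show "setdist_e p {q. x \<in> solution_map F G q} \<le> ereal (r * (l1 + l2) * dist x x')"
      using x x' p \<open>0 < r\<close> \<open>0 \<le> l2\<close>
      by (intro solution_map_inverse_step[where \<epsilon> = \<epsilon>])
        (auto simp: \<epsilon>_def \<rho>_def intro: reg_ball lipF_ball lipG_ball)
  qed
qed

lemma solution_map_metric_regular:
  fixes F :: "'x::real_normed_vector \<Rightarrow> 'p::real_normed_vector \<Rightarrow> 'y::real_normed_vector set"
  assumes reg: "metric_regular_p F xb pb yb r" and lipF: "lipschitz_like_x F xb pb yb l1"
    and lipG: "lipschitz_like G xb (- yb) l2" and stable: "locally_sum_stable F G xb pb yb (- yb)"
    and "yb \<in> F xb pb" and "- yb \<in> G xb" and "r * (l1 + l2) < L"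
  shows "metric_regular (solution_map F G) pb xb L"
proof -
  obtain \<rho> where "0 < \<rho>" and est:
    "\<And>x p x'. x \<in> ball xb \<rho> \<Longrightarrow> p \<in> ball pb \<rho> \<Longrightarrow> x' \<in> ball xb \<rho> \<Longrightarrow> x' \<in> solution_map F G p \<Longrightarrow>
       setdist_e p {q. x \<in> solution_map F G q} \<le> ereal (r * (l1 + l2) * dist x x')"
    using solution_map_inverse_estimate[OF reg lipF lipG stable] by metis
  have "xb \<in> solution_map F G pb"
    using \<open>yb \<in> F xb pb\<close> \<open>- yb \<in> G xb\<close> by (auto simp: mem_solution_map_iff)
  moreover have "0 \<le> r * (l1 + l2)"
    using reg lipF lipG by (simp add: metric_regular_p_def lipschitz_like_x_def lipschitz_like_def)
  ultimately show ?thesis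
    using \<open>r * (l1 + l2) < L\<close> \<open>0 < \<rho>\<close> est by (rule metric_regular_if_inverse_estimate)
qed

theorem theorem4p12:
  fixes F :: "'x::banach \<Rightarrow> 'p::banach \<Rightarrow> 'y::banach set"
    and G :: "'x \<Rightarrow> 'y set"
    and xb :: 'x and pb :: 'p and yb :: 'y
  defines "S \<equiv> (\<lambda>p. {x. 0 \<in> {y + z | y z. y \<in> F x p \<and> z \<in> G x}})"
  assumes "yb \<in> F xb pb" and "- yb \<in> G xb"
    and i: "locally_sum_stable F G xb pb yb (- yb)"
    and ii: "\<exists>U. open U \<and> xb \<in> U \<and> (\<forall>x\<in>U. inner_semicontinuous (F x) pb yb)"
    and iii: "\<exists>L. lipschitz_like_x F xb pb yb L"
    and iv: "\<exists>L. metric_regular_p F xb pb yb L"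
    and v: "\<exists>L. lipschitz_like G xb (- yb) L"
  shows "(\<exists>L. metric_regular S pb xb L) \<and>
         reg S pb xb \<le> reg_hat_p F xb pb yb * (lip_hat_x F xb pb yb + lip G xb (- yb))"
proof -
  define K where "K = reg_hat_p F xb pb yb * (lip_hat_x F xb pb yb + lip G xb (- yb))"
  have regular: "metric_regular S pb xb L" if "K < L" for L
  proof -
    obtain \<eta> where "0 < \<eta>" and bound:
      "(reg_hat_p F xb pb yb + \<eta>) * ((lip_hat_x F xb pb yb + \<eta>) + (lip G xb (- yb) + \<eta>)) < L"
      using perturbed_product_less \<open>K < L\<close> unfolding K_def by blast
    have reg: "metric_regular_p F xb pb yb (reg_hat_p F xb pb yb + \<eta>)"
      using iv unfolding reg_hat_p_def
      by (rule mem_upward_closed_if_Inf_less) (fact metric_regular_p_mono, simp add: \<open>0 < \<eta>\<close>)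
    have lipF: "lipschitz_like_x F xb pb yb (lip_hat_x F xb pb yb + \<eta>)"
      using iii unfolding lip_hat_x_def
      by (rule mem_upward_closed_if_Inf_less) (fact lipschitz_like_x_mono, simp add: \<open>0 < \<eta>\<close>)
    have lipG: "lipschitz_like G xb (- yb) (lip G xb (- yb) + \<eta>)"
      using v unfolding lip_def
      by (rule mem_upward_closed_if_Inf_less) (fact lipschitz_like_mono, simp add: \<open>0 < \<eta>\<close>)
    have "S = solution_map F G" by (simp add: S_def solution_map_def fun_eq_iff)
    with solution_map_metric_regular[OF reg lipF lipG i \<open>yb \<in> F xb pb\<close> \<open>- yb \<in> G xb\<close> bound]
    show ?thesis by simp
  qed
  have "reg S pb xb \<le> K"
    unfolding reg_def by (rule Inf_le_if_all_greater[OF regular]) (auto simp: metric_regular_def)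
  moreover have "\<exists>L. metric_regular S pb xb L" by (rule exI, rule regular[of "K + 1"]) simp
  ultimately show ?thesis unfolding K_def by (intro conjI)
qed

end
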